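(* Let $(G,H,\mathcal{L})$ be a cut-and-project scheme with $G=\mathbb{R}^d$ such that $\mathcal{L}$ and $\mathcal{L}^\circ$ are both countable. Let $D$ be a lattice in $\mathbb{R}^d$ with $D\cap\pi^G(\mathcal{L})=\{0\}$ and $D^\circ\cap\pi^{\widehat G}(\mathcal{L}^\circ)=\{0\}$, let $\mathbb{K}=\mathbb{R}^d/D$ with quotient map $\psi$, let $H'=H\times\mathbb{K}$, let $\phi:\pi^G(\mathcal{L})\to H'$, $\phi(x)=(x^\star,\psi(x))$, and let $\mathcal{L}'=\{(x,\phi(x)):x\in\pi^G(\mathcal{L})\}$. Then: (a) $(G,H',\mathcal{L}')$ is a cut-and-project scheme whose $\star$-map is $\phi$, and $\phi$ is injective; (b) for every $W\subseteq H$ we have $\Lambda_W=\Lambda'_{W'}$, where $W'=W\times\mathbb{K}$; (c) if $H$ is $\sigma$-compact (resp. metrisable), then so is $H'$.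
   Context: A cut-and-project scheme $(G,H,\mathcal{L})$ consists of locally compact abelian groups $G,H$ and a discrete cocompact subgroup $\mathcal{L}\subseteq G\times H$ such that $\pi^G|_{\mathcal{L}}$ is injective and $\pi^H(\mathcal{L})$ is dense in $H$. The $\star$-map on $\pi^G(\mathcal{L})$ is $x^\star=\pi^H((\pi^G|_{\mathcal{L}})^{-1}(x))$. $\Lambda_W=\pi^G(\mathcal{L}\cap(G\times W))$ and $\Lambda'_{W'}=\pi^G(\mathcal{L}'\cap(G\times W'))$. The dual group $\widehat G$ is identified with $\mathbb{R}^d$ via $x\mapsto(y\mapsto e^{2\pi i\langle x,y\rangle})$; $\mathcal{L}^\circ\subseteq\widehat G\times\widehat H$ is the annihilator of $\mathcal L$ and $\pi^{\widehat G}$ the projection to $\widehat G$. For a lattice $D$, $D^\circ=\{x\in\mathbb{R}^d:\langle y,x\rangle\in\mathbb{Z}\ \forall y\in D\}$. *)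

theory Defs
  imports "HOL-Analysis.Analysis"
begin

definition lca_group :: "'a::{ab_group_add, topological_space} itself \<Rightarrow> bool" where
  "lca_group _ \<longleftrightarrow>
     continuous_on UNIV (\<lambda>p::'a \<times> 'a. fst p + snd p) \<and>
     continuous_on UNIV (uminus :: 'a \<Rightarrow> 'a) \<and>
     Hausdorff_space (euclidean :: 'a topology) \<and>
     locally_compact_space (euclidean :: 'a topology)"

definition add_subgroup :: "'a::ab_group_add set \<Rightarrow> bool" where
  "add_subgroup S \<longleftrightarrow> 0 \<in> S \<and> (\<forall>x\<in>S. \<forall>y\<in>S. x + y \<in> S) \<and> (\<forall>x\<in>S. - x \<in> S)"

definition discrete_set :: "'a::topological_space set \<Rightarrow> bool" where
  "discrete_set S \<longleftrightarrow> (\<forall>z\<in>S. \<exists>U. open U \<and> U \<inter> S = {z})"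

text \<open>Cocompact: the quotient is compact, i.e. some compact set meets every coset.\<close>
definition cocompact :: "'a::{ab_group_add, topological_space} set \<Rightarrow> bool" where
  "cocompact S \<longleftrightarrow> (\<exists>K. compact K \<and> {k + s | k s. k \<in> K \<and> s \<in> S} = UNIV)"

definition cut_and_project ::
  "('g::{ab_group_add, topological_space} \<times> 'h::{ab_group_add, topological_space}) set \<Rightarrow> bool" where
  "cut_and_project L \<longleftrightarrow>
     lca_group TYPE('g) \<and> lca_group TYPE('h) \<and>
     add_subgroup L \<and> discrete_set L \<and> cocompact L \<and>
     inj_on fst L \<and> closure (snd ` L) = UNIV"

definition star_map :: "('g \<times> 'h) set \<Rightarrow> 'g \<Rightarrow> 'h" where
  "star_map L x = snd (THE z. z \<in> L \<and> fst z = x)"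

definition model_set :: "('g \<times> 'h) set \<Rightarrow> 'h set \<Rightarrow> 'g set" where
  "model_set L W = fst ` (L \<inter> (UNIV \<times> W))"

definition characters :: "('h::{ab_group_add, topological_space} \<Rightarrow> complex) set" where
  "characters = {f. continuous_on UNIV f \<and> (\<forall>h. norm (f h) = 1) \<and>
                    (\<forall>a b. f (a + b) = f a * f b)}"

text \<open>Annihilator of L in dual(G) x dual(H), with dual(G) = R^d via
  xi maps to (y maps to exp(2 pi i <xi,y>)).\<close>
definition annihilator ::
  "((real^'n) \<times> 'h::{ab_group_add, topological_space}) set \<Rightarrow> ((real^'n) \<times> ('h \<Rightarrow> complex)) set" where
  "annihilator L = {(\<xi>, f). f \<in> characters \<and>
      (\<forall>(x, h) \<in> L. cis (2 * pi * (\<xi> \<bullet> x)) * f h = 1)}"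

definition lattice :: "(real^'n) set \<Rightarrow> bool" where
  "lattice D \<longleftrightarrow> (\<exists>M :: real^'n^'n. invertible M \<and>
      D = {M *v (\<chi> i. of_int (c i)) | c :: 'n \<Rightarrow> int. True})"

definition dual_lattice :: "(real^'n) set \<Rightarrow> (real^'n) set" where
  "dual_lattice D = {x. \<forall>y\<in>D. y \<bullet> x \<in> \<int>}"

text \<open>\<psi> realises 'k as the topological quotient group R^d / D.\<close>
definition quotient_map_by :: "(real^'n) set \<Rightarrow> (real^'n \<Rightarrow> 'k::{ab_group_add, topological_space}) \<Rightarrow> bool" where
  "quotient_map_by D \<psi> \<longleftrightarrow>
     (\<forall>x y. \<psi> (x + y) = \<psi> x + \<psi> y) \<and> surj \<psi> \<and> {x. \<psi> x = 0} = D \<and>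
     continuous_on UNIV \<psi> \<and> (\<forall>U. open U \<longrightarrow> open (\<psi> ` U))"

definition sigma_compact_type :: "'a::topological_space itself \<Rightarrow> bool" where
  "sigma_compact_type _ \<longleftrightarrow> (\<exists>F::'a set set. countable F \<and> (\<forall>K\<in>F. compact K) \<and> \<Union>F = UNIV)"

definition metrisable_type :: "'a::topological_space itself \<Rightarrow> bool" where
  "metrisable_type _ \<longleftrightarrow> metrizable_space (euclidean :: 'a topology)"

end

theory Submission
  imports Defs
begin

(* Write L' as the image of L under (x, h) |-> (x, h, psi x). Discreteness, cocompactness (the
   torus K = R^d / D is compact) and injectivity of the projection to G pass from L to L', its star
   map is phi, windows W x K give the same model sets, and D meeting pi^G(L) only in 0 makes phi
   injective. For (c), K is compact and psi x |-> (exp (2 pi i (M^-1 x)_j))_j, where D = M Z^d,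
   is a continuous injection of K into C^d.

   The substance is density. The closure C of pi^H'(L') is a closed subgroup of H x K which
   projects onto H, since K is compact. If C were proper, B = {y. (0, psi y) in C} would be a
   proper closed subgroup of R^d containing D, and such a subgroup is annihilated by some xi ~= 0,
   i.e. xi . B is contained in Z: modulo its largest linear subspace, B is discrete, so its
   coordinates with respect to a basis of R^d inside B have finitely many fractional parts and
   hence a common denominator. Then xi lies in the dual lattice of D, y |-> exp (2 pi i xi . y)
   descends to a character of K that is trivial on the fibre of C over 0, and through C it
   induces a continuous character eta of H. The pair (xi, conj eta) annihilates L, contradicting
   the hypothesis on the dual lattice. *)

lemma add_subgroup_zero: "add_subgroup S \<Longrightarrow> 0 \<in> S"
  by (simp add: add_subgroup_def)

lemma add_subgroup_add: "add_subgroup S \<Longrightarrow> x \<in> S \<Longrightarrow> y \<in> S \<Longrightarrow> x + y \<in> S"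
  by (simp add: add_subgroup_def)

lemma add_subgroup_uminus: "add_subgroup S \<Longrightarrow> x \<in> S \<Longrightarrow> - x \<in> S"
  by (simp add: add_subgroup_def)

lemma add_subgroup_diff: "add_subgroup S \<Longrightarrow> x \<in> S \<Longrightarrow> y \<in> S \<Longrightarrow> x - y \<in> S"
  using add_subgroup_add[of S x "- y"] add_subgroup_uminus[of S y] by simp

lemma add_subgroup_sum:
  assumes "add_subgroup S" "\<And>i. i \<in> I \<Longrightarrow> f i \<in> S"
  shows "sum f I \<in> S"
  using assms(2)
  by (induction I rule: infinite_finite_induct)
     (auto intro: add_subgroup_zero[OF assms(1)] add_subgroup_add[OF assms(1)])

lemma add_subgroup_scaleR_of_nat:
  fixes S :: "'a::real_vector set"
  assumes "add_subgroup S" "x \<in> S"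
  shows "of_nat k *\<^sub>R x \<in> S"
  by (induction k) (simp_all add: algebra_simps add_subgroup_zero add_subgroup_add assms)

lemma add_subgroup_scaleR_of_int:
  fixes S :: "'a::real_vector set"
  assumes "add_subgroup S" "x \<in> S"
  shows "of_int k *\<^sub>R x \<in> S"
proof (cases k rule: int_cases)
  case (nonneg n)
  then show ?thesis using add_subgroup_scaleR_of_nat[OF assms] by simp
next
  case (neg n)
  then have "of_int k *\<^sub>R x = - (of_nat (Suc n) *\<^sub>R x)"
    by (simp only: of_int_minus of_int_of_nat_eq scaleR_minus_left)
  then show ?thesis
    by (metis add_subgroup_uminus add_subgroup_scaleR_of_nat assms)
qed

lemma add_subgroup_image:
  assumes "add_subgroup S" and additive: "\<And>x y. x \<in> S \<Longrightarrow> y \<in> S \<Longrightarrow> f (x + y) = f x + f y"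
  shows "add_subgroup (f ` S)"
proof -
  have "f 0 = 0" using additive[of 0 0] add_subgroup_zero[OF assms(1)] by simp
  moreover have "f (- x) = - f x" if "x \<in> S" for x
    using additive[of x "- x"] that add_subgroup_uminus[OF assms(1)] \<open>f 0 = 0\<close>
    by (simp add: eq_neg_iff_add_eq_0 add.commute)
  ultimately show ?thesis
    unfolding add_subgroup_def
  proof (intro conjI ballI)
    show "0 \<in> f ` S" using \<open>f 0 = 0\<close> add_subgroup_zero[OF assms(1)] by (metis image_eqI)
    fix a b assume "a \<in> f ` S" "b \<in> f ` S"
    then obtain x y where "x \<in> S" "y \<in> S" "a + b = f (x + y)" using additive by auto
    then show "a + b \<in> f ` S" using add_subgroup_add[OF assms(1)] by blast
  next
    fix a assume "a \<in> f ` S"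
    then obtain x where "x \<in> S" "- a = f (- x)"
      using \<open>\<And>x. x \<in> S \<Longrightarrow> f (- x) = - f x\<close> by auto
    then show "- a \<in> f ` S" using add_subgroup_uminus[OF assms(1)] by blast
  qed
qed

lemma add_subgroup_vimage:
  assumes "add_subgroup S" and additive: "\<And>x y. f (x + y) = f x + f y"
  shows "add_subgroup (f -` S)"
proof -
  have "f 0 = 0" using additive[of 0 0] by simp
  moreover have "f (- x) = - f x" for x
    using additive[of x "- x"] \<open>f 0 = 0\<close> by (simp add: eq_neg_iff_add_eq_0 add.commute)
  ultimately show ?thesis
    using assms(1) unfolding add_subgroup_def by (simp add: additive)
qed

lemma add_subgroup_closure:
  fixes S :: "'a::{ab_group_add, topological_space} set"
  assumes "continuous_on UNIV (\<lambda>p::'a \<times> 'a. fst p + snd p)" "continuous_on UNIV (uminus :: 'a \<Rightarrow> 'a)"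
    and "add_subgroup S"
  shows "add_subgroup (closure S)"
proof -
  have sum: "(\<lambda>p. fst p + snd p) ` closure (S \<times> S) \<subseteq> closure S"
    using assms add_subgroup_add[OF assms(3)]
    by (intro image_closure_subset) (auto intro: continuous_on_subset closure_subset[THEN subsetD])
  have neg: "uminus ` closure S \<subseteq> closure S"
    using assms add_subgroup_uminus[OF assms(3)]
    by (intro image_closure_subset) (auto intro: continuous_on_subset closure_subset[THEN subsetD])
  have "x + y \<in> closure S" if "x \<in> closure S" "y \<in> closure S" for x y
  proof -
    have "(x, y) \<in> closure (S \<times> S)" using that by (simp add: closure_Times)
    then show ?thesis using sum by force
  qed
  then show ?thesis
    using neg add_subgroup_zero[OF assms(3)] closure_subset unfolding add_subgroup_def by blast
qed

lemma add_subgroup_finite_frac_imp_Ints_multiple: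
  fixes G :: "real set"
  assumes "add_subgroup G" "finite (frac ` G)"
  shows "\<exists>N::nat. N > 0 \<and> (\<forall>g\<in>G. of_nat N * g \<in> \<int>)"
proof -
  have "\<exists>d::nat. d > 0 \<and> of_nat d * \<phi> \<in> \<int>" if \<phi>: "\<phi> \<in> frac ` G" for \<phi>
  proof -
    obtain g where g: "g \<in> G" "\<phi> = frac g" using \<phi> by blast
    have "range (\<lambda>k::nat. frac (of_nat k * g)) \<subseteq> frac ` G"
      using add_subgroup_scaleR_of_nat[OF assms(1) g(1)] by auto
    then have "\<not> inj (\<lambda>k::nat. frac (of_nat k * g))"
      using assms(2) range_inj_infinite finite_subset by blast
    then obtain a b :: nat where "a < b" "frac (of_nat a * g) = frac (of_nat b * g)"
      unfolding inj_def by (metis linorder_neqE_nat)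
    then have "of_nat (b - a) * g = of_int (\<lfloor>of_nat b * g\<rfloor> - \<lfloor>of_nat a * g\<rfloor>)"
      by (simp add: frac_def of_nat_diff left_diff_distrib)
    then have "of_nat (b - a) * frac g \<in> \<int>"
      unfolding frac_def right_diff_distrib by (intro Ints_diff) auto
    then show ?thesis
      using \<open>a < b\<close> g(2) by (intro exI[of _ "b - a"]) auto
  qed
  then obtain d where d: "\<And>\<phi>. \<phi> \<in> frac ` G \<Longrightarrow> d \<phi> > 0 \<and> of_nat (d \<phi>) * \<phi> \<in> \<int>"
    by metis
  define N where "N = (\<Prod>\<phi>\<in>frac ` G. d \<phi>)"
  have "of_nat N * g \<in> \<int>" if "g \<in> G" for g
  proof -
    have \<phi>: "frac g \<in> frac ` G" using that by blast
    have "of_nat N * frac g = of_nat (\<Prod>\<phi>\<in>frac ` G - {frac g}. d \<phi>) * (of_nat (d (frac g)) * frac g)"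
      unfolding N_def prod.remove[OF assms(2) \<phi>] of_nat_mult by (simp only: mult_ac)
    also have "\<dots> \<in> \<int>" using d[OF \<phi>] by (blast intro: Ints_mult Ints_of_nat)
    finally have "of_nat N * frac g + of_nat N * of_int \<lfloor>g\<rfloor> \<in> \<int>" by (intro Ints_add) auto
    then show ?thesis by (simp add: frac_def algebra_simps)
  qed
  moreover have "N > 0" unfolding N_def using d by (simp add: prod_pos)
  ultimately show ?thesis by blast
qed

lemma closed_subgroup_contains_limit_direction:
  fixes B :: "'a::real_normed_vector set"
  assumes "closed B" "add_subgroup B"
    and b: "\<And>k. b k \<in> B" "\<And>k. b k \<noteq> 0" "(\<lambda>k. norm (b k)) \<longlonglongrightarrow> 0"
    and l: "(\<lambda>k. b k /\<^sub>R norm (b k)) \<longlonglongrightarrow> l"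
  shows "t *\<^sub>R l \<in> B"
proof -
  define z where "z k = of_int \<lfloor>t / norm (b k)\<rfloor> *\<^sub>R b k" for k
  have "z k \<in> B" for k unfolding z_def by (rule add_subgroup_scaleR_of_int[OF assms(2) b(1)])
  moreover have "(\<lambda>k. z k - t *\<^sub>R (b k /\<^sub>R norm (b k))) \<longlonglongrightarrow> 0"
  proof (rule Lim_null_comparison[OF _ b(3)])
    have "norm (z k - t *\<^sub>R (b k /\<^sub>R norm (b k))) = \<bar>of_int \<lfloor>t / norm (b k)\<rfloor> - t / norm (b k)\<bar> * norm (b k)" for k
      unfolding z_def by (simp add: divide_inverse flip: scaleR_diff_left)
    moreover have "\<bar>of_int \<lfloor>s\<rfloor> - s\<bar> \<le> 1" for s :: real by linarith
    ultimately show "\<forall>\<^sub>F k in sequentially. norm (z k - t *\<^sub>R (b k /\<^sub>R norm (b k))) \<le> norm (b k)"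
      by (simp add: mult_left_le_one_le)
  qed
  from tendsto_add[OF this tendsto_scaleR[OF tendsto_const l, of t]] have "z \<longlonglongrightarrow> t *\<^sub>R l"
    by simp
  ultimately show ?thesis by (rule closed_sequentially[OF assms(1)])
qed

lemma closed_subgroup_projection_bounded_below:
  fixes B :: "'a::euclidean_space set" and P :: "'a \<Rightarrow> 'a"
  assumes "closed B" "add_subgroup B" "linear P"
    and idem: "\<And>y. P (P y) = P y" and PB: "\<And>b. b \<in> B \<Longrightarrow> P b \<in> B"
    and kernel: "\<And>v. (\<forall>t. t *\<^sub>R v \<in> B) \<Longrightarrow> P v = 0"
  shows "\<exists>\<epsilon>>0. \<forall>b\<in>B. P b \<noteq> 0 \<longrightarrow> \<epsilon> \<le> norm (P b)"
proof (rule ccontr)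
  assume "\<not> ?thesis"
  then have "\<exists>b\<in>B. P b \<noteq> 0 \<and> norm (P b) < 1 / Suc k" for k
    by (metis not_le of_nat_0_less_iff zero_less_Suc zero_less_divide_1_iff)
  then obtain g where g: "\<And>k. g k \<in> B" "\<And>k. P (g k) \<noteq> 0" "\<And>k. norm (P (g k)) < 1 / Suc k"
    by metis
  define u where "u k = P (g k) /\<^sub>R norm (P (g k))" for k
  have "u k \<in> sphere 0 1" for k using g(2) by (simp add: u_def)
  then obtain l r where l: "l \<in> sphere 0 1" "strict_mono r" "(u \<circ> r) \<longlonglongrightarrow> l"
    using compact_sphere[THEN compact_imp_seq_compact] unfolding seq_compact_def by metis
  have "(\<lambda>k. norm (P (g k))) \<longlonglongrightarrow> 0"
    by (rule Lim_null_comparison[OF _ LIMSEQ_inverse_real_of_nat])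
       (use g(3) in \<open>auto intro!: always_eventually less_imp_le simp: inverse_eq_divide\<close>)
  then have "(\<lambda>k. norm (P (g (r k)))) \<longlonglongrightarrow> 0"
    using LIMSEQ_subseq_LIMSEQ[OF _ l(2)] by (simp add: o_def)
  moreover have "(\<lambda>k. P (g (r k)) /\<^sub>R norm (P (g (r k)))) \<longlonglongrightarrow> l"
    using l(3) by (simp add: o_def u_def)
  ultimately have "t *\<^sub>R l \<in> B" for t
    using closed_subgroup_contains_limit_direction[OF assms(1,2), of "\<lambda>k. P (g (r k))" l] PB g(1,2)
    by blast
  then have "P l = 0" using kernel by blast
  moreover have "P l = l"
  proof (rule LIMSEQ_unique)
    have "P (u k) = u k" for k
      unfolding u_def using linear_scale[OF \<open>linear P\<close>] idem by simp
    then show "(u \<circ> r) \<longlonglongrightarrow> P l"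
      using isCont_tendsto_compose[OF linear_continuous_at[OF linear_conv_bounded_linear[THEN iffD1, OF \<open>linear P\<close>]] l(3)]
      by (simp add: o_def)
  qed (fact l(3))
  ultimately show False using l(1) by simp
qed

lemma closed_subgroup_projection_uniform_discrete:
  fixes B :: "'a::euclidean_space set" and P :: "'a \<Rightarrow> 'a"
  assumes "closed B" "add_subgroup B" "linear P"
    and "\<And>y. P (P y) = P y" "\<And>b. b \<in> B \<Longrightarrow> P b \<in> B" "\<And>v. (\<forall>t. t *\<^sub>R v \<in> B) \<Longrightarrow> P v = 0"
  shows "uniform_discrete (P ` B)"
proof -
  obtain \<epsilon> where \<epsilon>: "\<epsilon> > 0" "\<And>b. b \<in> B \<Longrightarrow> P b \<noteq> 0 \<Longrightarrow> \<epsilon> \<le> norm (P b)"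
    using closed_subgroup_projection_bounded_below[OF assms] by blast
  show ?thesis
  proof (rule uniformI2[OF \<epsilon>(1)])
    fix x y assume "x \<in> P ` B" "y \<in> P ` B" "x \<noteq> y"
    then obtain b c where "b \<in> B" "c \<in> B" "x = P b" "y = P c" by blast
    then show "\<epsilon> \<le> dist x y"
      using \<open>x \<noteq> y\<close> \<epsilon>(2)[of "b - c"] add_subgroup_diff[OF assms(2)] linear_diff[OF assms(3)]
      by (simp add: dist_norm)
  qed
qed

definition basis_projection :: "'a::real_vector set \<Rightarrow> 'a set \<Rightarrow> 'a \<Rightarrow> 'a" where
  "basis_projection \<beta> W y = (\<Sum>w\<in>W. representation \<beta> y w *\<^sub>R w)"

lemma representation_sum_scaleR_basis:
  assumes "independent \<beta>" "W \<subseteq> \<beta>" "finite W"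
  shows "representation \<beta> (\<Sum>u\<in>W. c u *\<^sub>R u) v = (if v \<in> W then c v else 0)"
proof -
  have "representation \<beta> (\<Sum>u\<in>W. c u *\<^sub>R u) v = (\<Sum>u\<in>W. c u * (if v = u then 1 else 0))"
    using assms by (subst representation_sum)
      (auto simp: representation_scale representation_basis span_base subsetD intro: span_scale)
  also have "\<dots> = (if v \<in> W then c v else 0)"
    using assms(3) by (simp add: if_distrib[of "\<lambda>x. _ * x"] sum.delta cong: if_cong)
  finally show ?thesis .
qed

context
  fixes \<beta> :: "'a::euclidean_space set"
  assumes independent: "independent \<beta>" and spanning: "span \<beta> = UNIV"
begin

lemma linear_basis_projection: "linear (basis_projection \<beta> W)"
  unfolding basis_projection_def
  by (rule linearI)
     (simp_all add: representation_add representation_scale independent spanning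
       scaleR_add_left sum.distrib scaleR_sum_right)

lemma representation_basis_projection:
  assumes "W \<subseteq> \<beta>"
  shows "representation \<beta> (basis_projection \<beta> W y) v = (if v \<in> W then representation \<beta> y v else 0)"
  unfolding basis_projection_def using assms independent independent_imp_finite finite_subset
  by (intro representation_sum_scaleR_basis) blast+

lemma basis_projection_idem:
  assumes "W \<subseteq> \<beta>"
  shows "basis_projection \<beta> W (basis_projection \<beta> W y) = basis_projection \<beta> W y"
proof -
  have "basis_projection \<beta> W (basis_projection \<beta> W y)
      = (\<Sum>v\<in>W. representation \<beta> (basis_projection \<beta> W y) v *\<^sub>R v)"
    by (rule basis_projection_def)
  also have "\<dots> = (\<Sum>v\<in>W. representation \<beta> y v *\<^sub>R v)"
    by (rule sum.cong) (simp_all add: representation_basis_projection[OF assms])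
  finally show ?thesis by (simp add: basis_projection_def)
qed

lemma diff_basis_projection:
  assumes "W \<subseteq> \<beta>"
  shows "y - basis_projection \<beta> W y = (\<Sum>v\<in>\<beta> - W. representation \<beta> y v *\<^sub>R v)"
proof -
  have "finite \<beta>" using independent independent_imp_finite by blast
  have "y = (\<Sum>v\<in>\<beta>. representation \<beta> y v *\<^sub>R v)"
    using sum_representation_eq[OF independent, of y \<beta>] \<open>finite \<beta>\<close> by (simp add: spanning)
  also have "\<dots> = (\<Sum>v\<in>\<beta> - W. representation \<beta> y v *\<^sub>R v) + basis_projection \<beta> W y"
    unfolding basis_projection_def by (rule sum.subset_diff[OF assms \<open>finite \<beta>\<close>])
  finally show ?thesis by (simp add: algebra_simps)
qed

lemma basis_projection_eq_0:
  assumes "W \<subseteq> \<beta>" "v \<in> span (\<beta> - W)"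
  shows "basis_projection \<beta> W v = 0"
proof (rule linear_eq_0_on_span[OF linear_basis_projection _ assms(2)])
  fix x assume "x \<in> \<beta> - W"
  then show "basis_projection \<beta> W x = 0"
    unfolding basis_projection_def using independent
    by (intro sum.neutral) (auto simp: representation_basis)
qed

lemma bounded_basis_projection_unit_coordinates:
  assumes "W \<subseteq> \<beta>"
  shows "bounded {y \<in> range (basis_projection \<beta> W). \<forall>v\<in>W. representation \<beta> y v \<in> {0..<1}}"
  unfolding bounded_iff
proof (intro exI ballI)
  fix y assume y: "y \<in> {y \<in> range (basis_projection \<beta> W). \<forall>v\<in>W. representation \<beta> y v \<in> {0..<1}}"
  then have "y = basis_projection \<beta> W y" using basis_projection_idem[OF assms] by auto
  then have "norm y \<le> (\<Sum>v\<in>W. norm (representation \<beta> y v *\<^sub>R v))"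
    unfolding basis_projection_def by (metis norm_sum)
  also have "\<dots> \<le> (\<Sum>v\<in>W. norm v)"
    using y by (intro sum_mono) (auto simp: mult_left_le_one_le)
  finally show "norm y \<le> (\<Sum>v\<in>W. norm v)" .
qed

lemma basis_projection_mem_add_subgroup:
  assumes "add_subgroup B" "S \<subseteq> \<beta>" "span S \<subseteq> B" "b \<in> B"
  shows "basis_projection \<beta> (\<beta> - S) b \<in> B"
proof -
  have "\<beta> - (\<beta> - S) = S" using assms(2) by blast
  then have "b - basis_projection \<beta> (\<beta> - S) b = (\<Sum>v\<in>S. representation \<beta> b v *\<^sub>R v)"
    by (simp add: diff_basis_projection[OF Diff_subset])
  also have "\<dots> \<in> span S" by (simp add: span_sum span_scale span_base)
  finally have "b - basis_projection \<beta> (\<beta> - S) b \<in> B" using assms(3) by blast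
  from add_subgroup_diff[OF assms(1,4) this] show ?thesis by simp
qed

end

lemma closed_subgroup_basis_projection_uniform_discrete:
  fixes B :: "'a::euclidean_space set"
  assumes "closed B" "add_subgroup B" "independent \<beta>" "span \<beta> = UNIV"
    and "S \<subseteq> \<beta>" "span S \<subseteq> B" "{v. \<forall>t. t *\<^sub>R v \<in> B} \<subseteq> span S"
  shows "uniform_discrete (basis_projection \<beta> (\<beta> - S) ` B)"
proof (rule closed_subgroup_projection_uniform_discrete[OF assms(1,2)])
  show "linear (basis_projection \<beta> (\<beta> - S))" by (rule linear_basis_projection[OF assms(3,4)])
  show "basis_projection \<beta> (\<beta> - S) v = 0" if "\<forall>t. t *\<^sub>R v \<in> B" for v
    using that assms(5,7) by (intro basis_projection_eq_0[OF assms(3,4)]) (auto simp: double_diff)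
qed (use basis_projection_idem[OF assms(3,4)] basis_projection_mem_add_subgroup[OF assms(3,4,2,5,6)] in auto)

lemma closed_subgroup_coordinate_fracs_finite:
  fixes B :: "'a::euclidean_space set"
  assumes "closed B" "add_subgroup B" "independent \<beta>" "span \<beta> = UNIV" "\<beta> \<subseteq> B"
    and "S \<subseteq> \<beta>" "span S \<subseteq> B" "{v. \<forall>t. t *\<^sub>R v \<in> B} \<subseteq> span S"
    and "w \<in> \<beta> - S"
  shows "finite ((\<lambda>b. frac (representation \<beta> b w)) ` B)"
proof -
  define W where "W = \<beta> - S"
  define P where "P = basis_projection \<beta> W"
  have W: "W \<subseteq> \<beta>" "finite W"
    using assms(3) independent_imp_finite by (auto simp: W_def finite_subset)
  note rep_P = representation_basis_projection[OF assms(3,4) W(1), folded P_def]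
  define F where "F = {y \<in> P ` B. \<forall>v\<in>W. representation \<beta> y v \<in> {0..<1}}"
  have "bounded F"
    using bounded_basis_projection_unit_coordinates[OF assms(3,4) W(1)]
    by (rule bounded_subset) (auto simp: F_def P_def)
  moreover have "uniform_discrete F"
    using closed_subgroup_basis_projection_uniform_discrete[OF assms(1-4,6-8)]
    by (rule uniform_discrete_subset) (auto simp: F_def P_def W_def)
  ultimately have "finite F" using uniform_discrete_finite_iff by blast
  moreover have "(\<lambda>b. frac (representation \<beta> b w)) ` B \<subseteq> (\<lambda>y. representation \<beta> y w) ` F"
  proof
    fix x assume "x \<in> (\<lambda>b. frac (representation \<beta> b w)) ` B"
    then obtain b where b: "b \<in> B" "x = frac (representation \<beta> b w)" by blast
    define b' where "b' = b - (\<Sum>v\<in>W. of_int \<lfloor>representation \<beta> b v\<rfloor> *\<^sub>R v)"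
    have "b' \<in> B"
      unfolding b'_def using W assms(5) b(1)
      by (intro add_subgroup_diff[OF assms(2)] add_subgroup_sum[OF assms(2)]
          add_subgroup_scaleR_of_int[OF assms(2)]) auto
    have rep_b': "representation \<beta> (P b') v = frac (representation \<beta> b v)" if "v \<in> W" for v
      using that W assms(3,4)
      by (simp add: b'_def rep_P representation_diff representation_sum_scaleR_basis frac_def)
    have "P b' \<in> F" using \<open>b' \<in> B\<close> rep_b' by (auto simp: F_def frac_lt_1)
    then show "x \<in> (\<lambda>y. representation \<beta> y w) ` F"
      using rep_b'[of w] assms(9) b(2) by (force simp: W_def)
  qed
  ultimately show ?thesis using finite_subset by blast
qed

lemma spanning_closed_subgroup_dual_vector:
  fixes B :: "'a::euclidean_space set"
  assumes "closed B" "add_subgroup B" "B \<noteq> UNIV" "span B = UNIV"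
  shows "\<exists>\<xi>. \<xi> \<noteq> 0 \<and> (\<forall>b\<in>B. \<xi> \<bullet> b \<in> \<int>)"
proof -
  define V where "V = {v. \<forall>t. t *\<^sub>R v \<in> B}"
  have "subspace V"
    unfolding subspace_def V_def
  proof (intro conjI allI impI ballI CollectI)
    fix x y t assume "x \<in> {v. \<forall>t. t *\<^sub>R v \<in> B}" "y \<in> {v. \<forall>t. t *\<^sub>R v \<in> B}"
    then show "t *\<^sub>R (x + y) \<in> B" using add_subgroup_add[OF assms(2)] by (simp add: scaleR_add_right)
  qed (simp_all add: add_subgroup_zero[OF assms(2)])
  obtain S where S: "S \<subseteq> V" "independent S" "V \<subseteq> span S" by (rule basis_exists)
  have "V \<subseteq> B" unfolding V_def by (force dest: spec[of _ 1])
  then have "span S \<subseteq> B" using span_minimal[OF S(1) \<open>subspace V\<close>] by blast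
  then obtain \<beta> where \<beta>: "S \<subseteq> \<beta>" "\<beta> \<subseteq> B" "independent \<beta>" "B \<subseteq> span \<beta>"
    using maximal_independent_subset_extend[OF order.trans[OF span_superset] S(2)] by blast
  have "span \<beta> = UNIV" using assms(4) span_minimal[OF \<beta>(4) subspace_span] by blast
  moreover have "\<not> \<beta> \<subseteq> S" using calculation \<open>span S \<subseteq> B\<close> assms(3) span_mono by blast
  then obtain w where w: "w \<in> \<beta> - S" by blast
  define c where "c y = representation \<beta> y w" for y
  have "linear c"
    unfolding c_def by (rule linearI) (simp_all add: representation_add representation_scale \<beta>(3) calculation)
  have "add_subgroup (c ` B)" using linear_add[OF \<open>linear c\<close>] by (intro add_subgroup_image assms(2))
  moreover have "finite (frac ` c ` B)"
    using closed_subgroup_coordinate_fracs_finite[OF assms(1,2) \<beta>(3) \<open>span \<beta> = UNIV\<close> \<beta>(2) \<beta>(1)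
        \<open>span S \<subseteq> B\<close> _ w] S(3)
    by (simp add: image_image c_def V_def)
  ultimately obtain N :: nat where N: "N > 0" "\<forall>g\<in>c ` B. of_nat N * g \<in> \<int>"
    using add_subgroup_finite_frac_imp_Ints_multiple by blast
  define \<xi> where "\<xi> = of_nat N *\<^sub>R adjoint c 1"
  have \<xi>: "\<xi> \<bullet> y = of_nat N * c y" for y
    using adjoint_works[OF \<open>linear c\<close>, of y 1] by (simp add: \<xi>_def inner_commute)
  have "c w = 1" using w \<beta>(3) by (simp add: c_def representation_basis)
  then have "\<xi> \<noteq> 0" using \<xi>[of w] N(1) by auto
  moreover have "\<xi> \<bullet> b \<in> \<int>" if "b \<in> B" for b using N(2) that by (simp add: \<xi>)
  ultimately show ?thesis by blast
qed

lemma proper_closed_subgroup_dual_vector: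
  fixes B :: "'a::euclidean_space set"
  assumes "closed B" "add_subgroup B" "B \<noteq> UNIV"
  shows "\<exists>\<xi>. \<xi> \<noteq> 0 \<and> (\<forall>b\<in>B. \<xi> \<bullet> b \<in> \<int>)"
proof (cases "span B = UNIV")
  case False
  then obtain \<xi> where \<xi>: "\<xi> \<noteq> 0" "\<forall>x\<in>span B. \<xi> \<bullet> x = 0"
    using span_not_UNIV_orthogonal by blast
  have "\<xi> \<bullet> b \<in> \<int>" if "b \<in> B" for b using \<xi>(2) span_base[OF that] by simp
  then show ?thesis using \<xi>(1) by blast
qed (rule spanning_closed_subgroup_dual_vector[OF assms])

lemma cis_2pi_eq_1_iff: "cis (2 * pi * a) = 1 \<longleftrightarrow> a \<in> \<int>"
proof
  assume "cis (2 * pi * a) = 1"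
  then obtain n where "2 * pi * a = of_int (2 * n) * pi"
    by (auto simp: cis_conv_exp exp_eq_1)
  then show "a \<in> \<int>" by (simp add: mult.commute)
qed simp

lemma cis_2pi_eq_iff: "cis (2 * pi * a) = cis (2 * pi * b) \<longleftrightarrow> a - b \<in> \<int>"
proof -
  have "cis (2 * pi * a) = cis (2 * pi * b) * cis (2 * pi * (a - b))"
    by (simp add: cis_mult algebra_simps)
  then show ?thesis by (simp flip: cis_2pi_eq_1_iff)
qed

lemma characters_cnj: "f \<in> characters \<Longrightarrow> (\<lambda>h. cnj (f h)) \<in> characters"
  unfolding characters_def by (simp add: continuous_on_cnj complex_cnj_mult)

lemma continuous_on_factor_open_surj:
  fixes q :: "'a::topological_space \<Rightarrow> 'b::topological_space" and g :: "'b \<Rightarrow> 'c::topological_space"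
  assumes "continuous_on UNIV (g \<circ> q)" "surj q" "\<And>U. open U \<Longrightarrow> open (q ` U)"
  shows "continuous_on UNIV g"
  unfolding continuous_on_open_vimage[OF open_UNIV]
proof (intro allI impI)
  fix V :: "'c set" assume "open V"
  then have "open (q ` ((g \<circ> q) -` V))" using assms(1,3) open_vimage by blast
  moreover have "q ` ((g \<circ> q) -` V) = g -` V \<inter> UNIV"
    using assms(2) by (auto simp: surj_def) (metis UNIV_I comp_apply image_eqI vimage_eq)
  ultimately show "open (g -` V \<inter> UNIV)" by simp
qed

lemma open_map_prod_image:
  assumes "\<And>U. open U \<Longrightarrow> open (f ` U)" "\<And>U. open U \<Longrightarrow> open (g ` U)" "open U"
  shows "open (map_prod f g ` U)"
proof (subst open_subopen, intro ballI)
  fix z assume "z \<in> map_prod f g ` U"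
  then obtain p where p: "p \<in> U" "z = map_prod f g p" by (auto elim!: imageE)
  then obtain A B where AB: "open A" "open B" "p \<in> A \<times> B" "A \<times> B \<subseteq> U"
    using open_prod_elim[OF assms(3)] by metis
  have "f ` A \<times> g ` B = map_prod f g ` (A \<times> B)" by (simp add: map_prod_surj_on)
  then have "z \<in> f ` A \<times> g ` B" "f ` A \<times> g ` B \<subseteq> map_prod f g ` U"
    using p AB(3,4) by auto
  moreover have "open (f ` A \<times> g ` B)" using assms(1,2) AB(1,2) by (simp add: open_Times)
  ultimately show "\<exists>T. open T \<and> z \<in> T \<and> T \<subseteq> map_prod f g ` U" by blast
qed

lemma closed_image_fst:
  fixes A :: "('a::topological_space \<times> 'b::topological_space) set"
  assumes "compact (UNIV :: 'b set)" "closed A"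
  shows "closed (fst ` A)"
proof -
  have "compact_space (euclidean :: 'b topology)"
    using assms(1) by (simp add: compact_space_def compactin_euclidean_iff)
  then have "closed_map (euclidean :: ('a \<times> 'b) topology) euclidean fst"
    using closed_map_fst[of "euclidean :: 'b topology" "euclidean :: 'a topology"] by simp
  then show ?thesis using assms(2) unfolding closed_map_def closed_closedin by blast
qed

lemma add_subgroup_prod_eq_UNIV:
  fixes C :: "('h::ab_group_add \<times> 'k::ab_group_add) set"
  assumes "add_subgroup C" "fst ` C = UNIV" "\<And>t. (0, t) \<in> C"
  shows "C = UNIV"
proof -
  have "(h, t) \<in> C" for h t
  proof -
    have "h \<in> fst ` C" using assms(2) by simp
    then obtain s where "(h, s) \<in> C" by force
    then have "(h, s) + (0, t - s) \<in> C" using add_subgroup_add[OF assms(1) _ assms(3)] by blast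
    then show ?thesis by simp
  qed
  then show ?thesis by auto
qed

lemma character_factor_through_closed_subgroup:
  fixes C :: "('h::{ab_group_add, topological_space} \<times> 'k::{ab_group_add, topological_space}) set"
  assumes "closed C" "add_subgroup C" "compact (UNIV :: 'k set)" "fst ` C = UNIV"
    and \<theta>: "\<theta> \<in> characters" and trivial: "\<And>t. (0, t) \<in> C \<Longrightarrow> \<theta> t = 1"
  shows "\<exists>\<eta>\<in>characters. \<forall>h t. (h, t) \<in> C \<longrightarrow> \<eta> h = \<theta> t"
proof -
  have \<theta>_mult: "\<theta> (s + t) = \<theta> s * \<theta> t" for s t using \<theta> by (simp add: characters_def)
  have fibre: "\<exists>t. (h, t) \<in> C" for h using assms(4) by (metis UNIV_I fst_conv imageE prod.collapse)
  define \<eta> where "\<eta> h = \<theta> (SOME t. (h, t) \<in> C)" for h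
  have \<eta>: "\<eta> h = \<theta> t" if "(h, t) \<in> C" for h t
  proof -
    define s where "s = (SOME t. (h, t) \<in> C)"
    have "(h, s) \<in> C" unfolding s_def using that by (rule someI)
    then have "(0, s - t) \<in> C" using add_subgroup_diff[OF assms(2) _ that] by fastforce
    then have "\<theta> s = \<theta> (s - t) * \<theta> t" "\<theta> (s - t) = 1" using \<theta>_mult[of "s - t" t] trivial by simp_all
    then show ?thesis by (simp add: \<eta>_def s_def)
  qed
  have "\<eta> (a + b) = \<eta> a * \<eta> b" for a b
    using fibre[of a] fibre[of b] \<eta> \<theta>_mult add_subgroup_add[OF assms(2)] by fastforce
  moreover have "norm (\<eta> h) = 1" for h using \<theta> by (simp add: \<eta>_def characters_def)
  moreover have "continuous_on UNIV \<eta>"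
    unfolding continuous_on_closed_vimage[OF closed_UNIV]
  proof (intro allI impI)
    fix F :: "complex set" assume "closed F"
    have "\<eta> -` F \<inter> UNIV = fst ` (C \<inter> (UNIV \<times> (\<theta> -` F)))"
    proof (intro set_eqI iffI)
      fix h assume "h \<in> \<eta> -` F \<inter> UNIV"
      moreover obtain t where "(h, t) \<in> C" using fibre by blast
      ultimately show "h \<in> fst ` (C \<inter> (UNIV \<times> (\<theta> -` F)))" using \<eta> by force
    qed (use \<eta> in force)
    moreover have "closed (C \<inter> (UNIV \<times> (\<theta> -` F)))"
      using \<theta> \<open>closed F\<close> assms(1) unfolding characters_def
      by (intro closed_Int closed_Times closed_vimage) auto
    ultimately show "closed (\<eta> -` F \<inter> UNIV)" using closed_image_fst[OF assms(3)] by simp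
  qed
  ultimately have "\<eta> \<in> characters" by (simp add: characters_def)
  then show ?thesis using \<eta> by blast
qed

lemma lattice_coordinates:
  fixes D :: "(real^'n) set"
  assumes "lattice D"
  obtains M Mi :: "real^'n^'n"
  where "\<And>x. M *v (Mi *v x) = x" "\<And>x. Mi *v (M *v x) = x" "D = {x. \<forall>i. (Mi *v x) $ i \<in> \<int>}"
proof -
  obtain M :: "real^'n^'n" where M: "invertible M" "D = {M *v (\<chi> i. of_int (c i)) | c :: 'n \<Rightarrow> int. True}"
    using assms unfolding lattice_def by blast
  obtain Mi where "M ** Mi = mat 1" "Mi ** M = mat 1" using M(1) unfolding invertible_def by blast
  then have inv: "M *v (Mi *v x) = x" "Mi *v (M *v x) = x" for x
    by (simp_all add: matrix_vector_mul_assoc)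
  have "D = {x. \<forall>i. (Mi *v x) $ i \<in> \<int>}"
  proof (intro set_eqI iffI)
    fix x assume "x \<in> D"
    then show "x \<in> {x. \<forall>i. (Mi *v x) $ i \<in> \<int>}" using M(2) by (auto simp: inv)
  next
    fix x assume "x \<in> {x. \<forall>i. (Mi *v x) $ i \<in> \<int>}"
    then have "(\<chi> i. of_int \<lfloor>(Mi *v x) $ i\<rfloor>) = Mi *v x" by (simp add: vec_eq_iff)
    then have "x = M *v (\<chi> i. of_int \<lfloor>(Mi *v x) $ i\<rfloor>)" by (simp add: inv)
    then show "x \<in> D" using M(2) by auto
  qed
  then show ?thesis using that inv by blast
qed

lemma continuous_on_matrix_coordinate:
  fixes A :: "real^'n^'m"
  shows "continuous_on S (\<lambda>x. (A *v x) $ i)"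
  by (intro continuous_intros)

locale vector_quotient =
  fixes D :: "(real^'n) set" and \<psi> :: "real^'n \<Rightarrow> 'k::{ab_group_add, topological_space}"
  assumes quotient: "quotient_map_by D \<psi>"
begin

lemma hom_add: "\<psi> (x + y) = \<psi> x + \<psi> y"
  using quotient by (simp add: quotient_map_by_def)

lemma surjective: "surj \<psi>"
  using quotient by (simp add: quotient_map_by_def)

lemma continuous: "continuous_on UNIV \<psi>"
  using quotient by (simp add: quotient_map_by_def)

lemma open_image: "open U \<Longrightarrow> open (\<psi> ` U)"
  using quotient by (simp add: quotient_map_by_def)

lemma hom_zero: "\<psi> 0 = 0"
  using hom_add[of 0 0] by simp

lemma hom_uminus: "\<psi> (- x) = - \<psi> x"
  using hom_add[of x "- x"] hom_zero by (simp add: eq_neg_iff_add_eq_0 add.commute)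

lemma hom_diff: "\<psi> (x - y) = \<psi> x - \<psi> y"
  using hom_add[of x "- y"] hom_uminus[of y] by simp

lemma kernel: "\<psi> x = 0 \<longleftrightarrow> x \<in> D"
  using quotient unfolding quotient_map_by_def by blast

lemma eq_iff: "\<psi> x = \<psi> y \<longleftrightarrow> x - y \<in> D"
  using kernel[of "x - y"] hom_diff[of x y] by simp

lemma continuous_on_factor:
  assumes "continuous_on UNIV f" "\<And>x y. x - y \<in> D \<Longrightarrow> f x = f y"
  obtains g where "continuous_on UNIV g" "\<And>x. g (\<psi> x) = f x"
proof
  define g where "g t = f (SOME x. \<psi> x = t)" for t
  show g: "g (\<psi> x) = f x" for x
  proof -
    have "\<psi> (SOME y. \<psi> y = \<psi> x) = \<psi> x" by (rule someI) (rule refl)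
    then show ?thesis unfolding g_def using assms(2) eq_iff by blast
  qed
  show "continuous_on UNIV g"
  proof (rule continuous_on_factor_open_surj)
    show "continuous_on UNIV (g \<circ> \<psi>)" using assms(1) by (simp add: o_def g)
  qed (simp_all add: surjective open_image)
qed

lemma continuous_add: "continuous_on UNIV (\<lambda>p::'k \<times> 'k. fst p + snd p)"
proof (rule continuous_on_factor_open_surj)
  show "continuous_on UNIV ((\<lambda>p::'k \<times> 'k. fst p + snd p) \<circ> map_prod \<psi> \<psi>)"
    using continuous_on_compose2[OF continuous, of UNIV "\<lambda>p. fst p + snd p"]
    by (simp add: o_def hom_add case_prod_beta continuous_intros)
qed (simp_all add: map_prod_surj surjective open_map_prod_image open_image)

lemma continuous_uminus: "continuous_on UNIV (uminus :: 'k \<Rightarrow> 'k)"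
proof (rule continuous_on_factor_open_surj)
  show "continuous_on UNIV (uminus \<circ> \<psi>)"
    using continuous_on_compose2[OF continuous, of UNIV uminus]
    by (simp add: o_def hom_uminus continuous_intros)
qed (simp_all add: surjective open_image)

lemma inj_on_pair_with_quotient:
  assumes "add_subgroup A" "D \<inter> A = {0}"
  shows "inj_on (\<lambda>x. (g x, \<psi> x)) A"
proof (rule inj_onI)
  fix x y assume "x \<in> A" "y \<in> A" "(g x, \<psi> x) = (g y, \<psi> y)"
  then have "x - y \<in> D \<inter> A" using eq_iff add_subgroup_diff[OF assms(1)] by simp
  then show "x = y" using assms(2) by auto
qed

lemma character_of_dual_vector:
  assumes "\<And>d. d \<in> D \<Longrightarrow> \<xi> \<bullet> d \<in> \<int>"
  obtains \<theta> where "\<theta> \<in> characters" "\<And>y. \<theta> (\<psi> y) = cis (2 * pi * (\<xi> \<bullet> y))"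
proof -
  have "continuous_on UNIV (\<lambda>y. cis (2 * pi * (\<xi> \<bullet> y)))"
    by (intro continuous_intros)
  moreover have "cis (2 * pi * (\<xi> \<bullet> x)) = cis (2 * pi * (\<xi> \<bullet> y))" if "x - y \<in> D" for x y
    using assms[OF that] by (simp add: cis_2pi_eq_iff inner_diff_right)
  ultimately obtain \<theta> where \<theta>: "continuous_on UNIV \<theta>" "\<And>y. \<theta> (\<psi> y) = cis (2 * pi * (\<xi> \<bullet> y))"
    using continuous_on_factor[of "\<lambda>y. cis (2 * pi * (\<xi> \<bullet> y))"] by blast
  have "\<theta> (\<psi> a + \<psi> b) = \<theta> (\<psi> a) * \<theta> (\<psi> b)" "norm (\<theta> (\<psi> a)) = 1" for a b
    by (simp_all flip: hom_add add: \<theta>(2) inner_add_right distrib_left cis_mult)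
  then have "\<theta> (s + t) = \<theta> s * \<theta> t" "norm (\<theta> t) = 1" for s t
    using surjective by (metis surjD)+
  then have "\<theta> \<in> characters" using \<theta>(1) by (simp add: characters_def)
  then show ?thesis using that \<theta>(2) by blast
qed

end

locale torus_quotient = vector_quotient D \<psi>
  for D :: "(real^'n) set" and \<psi> :: "real^'n \<Rightarrow> 'k::{ab_group_add, topological_space}" +
  assumes lattice: "lattice D"
begin

lemma compact_UNIV: "compact (UNIV :: 'k set)"
proof -
  obtain M Mi :: "real^'n^'n"
    where inv: "\<And>x. M *v (Mi *v x) = x" "\<And>x. Mi *v (M *v x) = x"
      and D: "D = {x. \<forall>i. (Mi *v x) $ i \<in> \<int>}"
    using lattice_coordinates[OF lattice] by blast
  have cover: "\<psi> x \<in> (\<psi> \<circ> (*v) M) ` cbox 0 1" for x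
  proof -
    define v where "v = Mi *v x"
    define r :: "real^'n" where "r = (\<chi> i. frac (v $ i))"
    have "r \<in> cbox 0 1" by (simp add: r_def mem_box_cart frac_ge_0 less_imp_le[OF frac_lt_1])
    moreover have "x - M *v r \<in> D"
      by (simp add: D r_def v_def inv matrix_vector_mult_diff_distrib frac_def)
    ultimately show ?thesis using eq_iff by (auto intro!: image_eqI[of _ _ r])
  qed
  have "compact ((\<psi> \<circ> (*v) M) ` cbox 0 1)"
    using continuous matrix_vector_mul_bounded_linear[of M]
    by (intro compact_continuous_image compact_cbox continuous_on_compose linear_continuous_on)
       (auto intro: continuous_on_subset)
  moreover have "(\<psi> \<circ> (*v) M) ` cbox 0 1 = UNIV"
    using cover surjective by (metis UNIV_eq_I surj_def)
  ultimately show ?thesis by simp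
qed

lemma continuous_injection_to_euclidean: "\<exists>e :: 'k \<Rightarrow> complex^'n. continuous_on UNIV e \<and> inj e"
proof -
  obtain M Mi :: "real^'n^'n" where D: "D = {x. \<forall>i. (Mi *v x) $ i \<in> \<int>}"
    using lattice_coordinates[OF lattice] by blast
  define E :: "real^'n \<Rightarrow> complex^'n" where "E x = (\<chi> i. cis (2 * pi * (Mi *v x) $ i))" for x
  have E_eq: "E x = E y \<longleftrightarrow> x - y \<in> D" for x y
    by (simp add: E_def vec_eq_iff cis_2pi_eq_iff D matrix_vector_mult_diff_distrib)
  have "continuous_on UNIV E"
    unfolding E_def
    by (intro continuous_on_vec_lambda continuous_on_cis continuous_on_mult_left continuous_on_of_real
        continuous_on_matrix_coordinate)
  then obtain e where "continuous_on UNIV e" "\<And>x. e (\<psi> x) = E x"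
    using continuous_on_factor[of E] E_eq by blast
  moreover have "inj e"
  proof (rule injI)
    fix s t assume "e s = e t"
    moreover obtain a b where "s = \<psi> a" "t = \<psi> b" using surjective by (metis surjD)
    ultimately show "s = t" using E_eq eq_iff \<open>\<And>x. e (\<psi> x) = E x\<close> by simp
  qed
  ultimately show ?thesis by blast
qed

lemma compact_space: "compact_space (euclidean :: 'k topology)"
  using compact_UNIV by (simp add: compact_space_def compactin_euclidean_iff)

lemma Hausdorff: "Hausdorff_space (euclidean :: 'k topology)"
proof -
  obtain e :: "'k \<Rightarrow> complex^'n" where "continuous_on UNIV e" "inj e"
    using continuous_injection_to_euclidean by blast
  then show ?thesis
    by (intro Hausdorff_space_injective_preimage[OF Hausdorff_space_euclidean, of _ e])
       (simp_all add: continuous_map_iff_continuous)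
qed

lemma metrizable: "metrizable_space (euclidean :: 'k topology)"
proof -
  obtain e :: "'k \<Rightarrow> complex^'n" where "continuous_on UNIV e" "inj e"
    using continuous_injection_to_euclidean by blast
  then have "embedding_map euclidean euclidean e"
    using compact_space by (intro continuous_imp_embedding_map) (simp_all add: continuous_map_iff_continuous)
  then have "(euclidean :: 'k topology) homeomorphic_space subtopology euclidean (range e)"
    using embedding_map_imp_homeomorphic_space by fastforce
  moreover have "metrizable_space (subtopology euclidean (range e))"
    by (simp add: metrizable_space_subtopology metrizable_space_euclidean)
  ultimately show ?thesis using homeomorphic_metrizable_space by blast
qed

lemma lca_group: "lca_group TYPE('k)"
  unfolding lca_group_def
  by (simp add: continuous_add continuous_uminus Hausdorff compact_imp_locally_compact_space[OF compact_space])

end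

lemma lca_group_prod:
  assumes "lca_group TYPE('h::{ab_group_add, topological_space})"
    and "lca_group TYPE('k::{ab_group_add, topological_space})"
  shows "lca_group TYPE('h \<times> 'k)"
proof -
  have add_h: "continuous_on UNIV (\<lambda>p::'h \<times> 'h. fst p + snd p)"
    and add_k: "continuous_on UNIV (\<lambda>p::'k \<times> 'k. fst p + snd p)"
    and neg_h: "continuous_on UNIV (uminus :: 'h \<Rightarrow> 'h)"
    and neg_k: "continuous_on UNIV (uminus :: 'k \<Rightarrow> 'k)"
    using assms unfolding lca_group_def by blast+
  have "continuous_on UNIV (\<lambda>p::('h \<times> 'k) \<times> ('h \<times> 'k). fst (fst p) + fst (snd p))"
    using continuous_on_compose2[OF add_h, of UNIV "\<lambda>p. (fst (fst p), fst (snd p))"]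
    by (simp add: continuous_intros)
  moreover have "continuous_on UNIV (\<lambda>p::('h \<times> 'k) \<times> ('h \<times> 'k). snd (fst p) + snd (snd p))"
    using continuous_on_compose2[OF add_k, of UNIV "\<lambda>p. (snd (fst p), snd (snd p))"]
    by (simp add: continuous_intros)
  ultimately have "continuous_on UNIV (\<lambda>p::('h \<times> 'k) \<times> ('h \<times> 'k). fst p + snd p)"
    by (auto dest: continuous_on_Pair simp: plus_prod_def case_prod_beta)
  moreover have "continuous_on UNIV (uminus :: 'h \<times> 'k \<Rightarrow> 'h \<times> 'k)"
    using continuous_on_Pair[OF continuous_on_compose2[OF neg_h, of UNIV fst]
        continuous_on_compose2[OF neg_k, of UNIV snd]]
    by (simp add: continuous_intros uminus_prod_def case_prod_beta)
  moreover have "Hausdorff_space (prod_topology (euclidean :: 'h topology) (euclidean :: 'k topology))"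
    using assms Hausdorff_space_prod_topology unfolding lca_group_def by blast
  moreover have "locally_compact_space (prod_topology (euclidean :: 'h topology) (euclidean :: 'k topology))"
    using assms locally_compact_space_prod_topology unfolding lca_group_def by blast
  ultimately show ?thesis unfolding lca_group_def by simp
qed

lemma sigma_compact_type_prod:
  assumes "sigma_compact_type TYPE('h::topological_space)" "compact (UNIV :: 'k::topological_space set)"
  shows "sigma_compact_type TYPE('h \<times> 'k)"
proof -
  obtain F :: "'h set set" where F: "countable F" "\<forall>K\<in>F. compact K" "\<Union>F = UNIV"
    using assms(1) unfolding sigma_compact_type_def by (elim exE conjE)
  define F' where "F' = (\<lambda>K. K \<times> (UNIV :: 'k set)) ` F"
  have "countable F'" unfolding F'_def using F(1) by (rule countable_image)
  moreover have "\<forall>K\<in>F'. compact K" unfolding F'_def using F(2) compact_Times[OF _ assms(2)] by blast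
  moreover have "\<Union>F' = UNIV"
  proof -
    have "p \<in> \<Union>F'" for p :: "'h \<times> 'k"
    proof -
      obtain K where "K \<in> F" "fst p \<in> K" using F(3) by (metis UNIV_I UnionE)
      then show ?thesis unfolding F'_def by (auto simp: mem_Times_iff)
    qed
    then show ?thesis by auto
  qed
  ultimately show ?thesis unfolding sigma_compact_type_def by (intro exI[of _ F']) simp
qed

lemma metrisable_type_prod:
  assumes "metrisable_type TYPE('h::topological_space)" "metrizable_space (euclidean :: 'k::topological_space topology)"
  shows "metrisable_type TYPE('h \<times> 'k)"
  using assms metrizable_space_prod_topology[of "euclidean :: 'h topology" "euclidean :: 'k topology"]
  unfolding metrisable_type_def by simp

lemma star_map_eq:
  assumes "inj_on fst L" "(x, h) \<in> L"
  shows "star_map L x = h"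
proof -
  have "(THE z. z \<in> L \<and> fst z = x) = (x, h)"
  proof (rule the_equality)
    fix z assume "z \<in> L \<and> fst z = x"
    then show "z = (x, h)" using assms by (metis fst_conv inj_onD)
  qed (use assms(2) in simp)
  then show ?thesis by (simp add: star_map_def)
qed

definition extended_lattice :: "('g \<times> 'h) set \<Rightarrow> ('g \<Rightarrow> 'k) \<Rightarrow> ('g \<times> 'h \<times> 'k) set" where
  "extended_lattice L f = (\<lambda>(x, h). (x, h, f x)) ` L"

lemma fst_extended_lattice: "fst ` extended_lattice L f = fst ` L"
  by (force simp: extended_lattice_def)

lemma inj_on_fst_extended_lattice:
  assumes "inj_on fst L"
  shows "inj_on fst (extended_lattice L f)"
  unfolding extended_lattice_def by (rule inj_on_imageI) (simp add: o_def case_prod_beta assms)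

lemma star_map_extended_lattice:
  assumes "inj_on fst L" "(x, h) \<in> L"
  shows "star_map (extended_lattice L f) x = (h, f x)"
  using assms by (intro star_map_eq inj_on_fst_extended_lattice) (force simp: extended_lattice_def)+

lemma model_set_extended_lattice: "model_set (extended_lattice L f) (W \<times> UNIV) = model_set L W"
  by (force simp: model_set_def extended_lattice_def)

lemma add_subgroup_extended_lattice:
  assumes "add_subgroup L" "\<And>x y. f (x + y) = f x + f y"
  shows "add_subgroup (extended_lattice L f)"
  unfolding extended_lattice_def using assms by (intro add_subgroup_image) auto

lemma discrete_set_extended_lattice:
  fixes L :: "('g::topological_space \<times> 'h::topological_space) set" and f :: "'g \<Rightarrow> 'k::topological_space"
  assumes "discrete_set L"
  shows "discrete_set (extended_lattice L f)"
  unfolding discrete_set_def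
proof
  fix z assume "z \<in> extended_lattice L f"
  then obtain x h where z: "z = (x, h, f x)" "(x, h) \<in> L" by (auto simp: extended_lattice_def)
  then obtain U where U: "open U" "U \<inter> L = {(x, h)}"
    using assms unfolding discrete_set_def by blast
  define U' where "U' = (\<lambda>p :: 'g \<times> 'h \<times> 'k. (fst p, fst (snd p))) -` U"
  have "open U'" unfolding U'_def by (intro open_vimage U(1) continuous_intros)
  moreover have "U' \<inter> extended_lattice L f = {z}"
  proof (intro set_eqI iffI)
    fix w assume "w \<in> U' \<inter> extended_lattice L f"
    then obtain y k where "w = (y, k, f y)" "(y, k) \<in> U \<inter> L"
      by (auto simp: U'_def extended_lattice_def)
    then show "w \<in> {z}" using U(2) z(1) by auto
  qed (use U(2) z in \<open>auto simp: U'_def extended_lattice_def\<close>)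
  ultimately show "\<exists>U. open U \<and> U \<inter> extended_lattice L f = {z}" by blast
qed

lemma cocompact_extended_lattice:
  fixes L :: "('g::{ab_group_add, topological_space} \<times> 'h::{ab_group_add, topological_space}) set"
    and f :: "'g \<Rightarrow> 'k::{ab_group_add, topological_space}"
  assumes "cocompact L" "compact (UNIV :: 'k set)"
  shows "cocompact (extended_lattice L f)"
proof -
  obtain K where K: "compact K" "{k + s | k s. k \<in> K \<and> s \<in> L} = UNIV"
    using assms(1) unfolding cocompact_def by blast
  define K' where "K' = (\<lambda>((a, b), t). (a, b, t)) ` (K \<times> (UNIV :: 'k set))"
  have "compact K'"
    unfolding K'_def using K(1) assms(2)
    by (intro compact_continuous_image compact_Times) (auto intro!: continuous_intros simp: case_prod_beta)
  moreover have "z \<in> {k + s | k s. k \<in> K' \<and> s \<in> extended_lattice L f}" for z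
  proof -
    obtain g h t where z: "z = (g, h, t)" by (metis prod.collapse)
    have "(g, h) \<in> {k + s | k s. k \<in> K \<and> s \<in> L}" using K(2) by simp
    then obtain k s where "k \<in> K" "s \<in> L" "(g, h) = k + s" by blast
    moreover obtain a b x y where "k = (a, b)" "s = (x, y)" by (metis prod.collapse)
    ultimately have "(a, b) \<in> K" "(x, y) \<in> L" "(g, h) = (a, b) + (x, y)" by simp_all
    then have "(a, b, t - f x) \<in> K'" "(x, y, f x) \<in> extended_lattice L f"
      "z = (a, b, t - f x) + (x, y, f x)"
      using z by (auto simp: K'_def extended_lattice_def intro!: image_eqI[of _ _ "((a, b), t - f x)"])
    then show ?thesis by blast
  qed
  ultimately show ?thesis unfolding cocompact_def by blast
qed

context torus_quotient
begin

lemma closed_subgroup_fibre_dual_vector: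
  fixes C :: "('h::{ab_group_add, topological_space} \<times> 'k) set"
  assumes "closed C" "add_subgroup C" "fst ` C = UNIV" "C \<noteq> UNIV"
  obtains \<xi> where "\<xi> \<noteq> 0" "\<And>y. (0, \<psi> y) \<in> C \<Longrightarrow> \<xi> \<bullet> y \<in> \<int>"
proof -
  define B where "B = (\<lambda>y. (0 :: 'h, \<psi> y)) -` C"
  have "closed B"
    unfolding B_def using assms(1) continuous
    by (intro closed_vimage) (auto intro: continuous_on_Pair continuous_on_const)
  moreover have "add_subgroup B"
    unfolding B_def using assms(2) by (rule add_subgroup_vimage) (simp add: hom_add)
  moreover have "B \<noteq> UNIV"
  proof
    assume "B = UNIV"
    have "(0, t) \<in> C" for t
    proof -
      obtain y where "t = \<psi> y" using surjective by (metis surjD)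
      then show ?thesis using \<open>B = UNIV\<close> unfolding B_def by blast
    qed
    then show False using add_subgroup_prod_eq_UNIV[OF assms(2,3)] assms(4) by blast
  qed
  ultimately obtain \<xi> where "\<xi> \<noteq> 0" "\<forall>b\<in>B. \<xi> \<bullet> b \<in> \<int>"
    using proper_closed_subgroup_dual_vector[of B] by blast
  then show ?thesis using that by (simp add: B_def)
qed

lemma proper_closed_subgroup_character:
  fixes C :: "('h::{ab_group_add, topological_space} \<times> 'k) set"
  assumes "closed C" "add_subgroup C" "fst ` C = UNIV" "C \<noteq> UNIV"
  obtains \<xi> \<eta> where "\<xi> \<noteq> 0" "\<xi> \<in> dual_lattice D" "\<eta> \<in> characters"
    "\<And>h y. (h, \<psi> y) \<in> C \<Longrightarrow> \<eta> h = cis (2 * pi * (\<xi> \<bullet> y))"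
proof -
  obtain \<xi> where \<xi>: "\<xi> \<noteq> 0" "\<And>y. (0, \<psi> y) \<in> C \<Longrightarrow> \<xi> \<bullet> y \<in> \<int>"
    using closed_subgroup_fibre_dual_vector[OF assms] by blast
  have dual: "\<xi> \<bullet> d \<in> \<int>" if "d \<in> D" for d
  proof -
    have "\<psi> d = 0" using that kernel by simp
    then show ?thesis using \<xi>(2)[of d] add_subgroup_zero[OF assms(2)] by (simp add: zero_prod_def)
  qed
  obtain \<theta> where \<theta>: "\<theta> \<in> characters" "\<And>y. \<theta> (\<psi> y) = cis (2 * pi * (\<xi> \<bullet> y))"
    using character_of_dual_vector[OF dual] by blast
  have "\<theta> t = 1" if "(0, t) \<in> C" for t
  proof -
    obtain y where "t = \<psi> y" using surjective by (metis surjD)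
    then show ?thesis using that \<xi>(2) \<theta>(2) by simp
  qed
  then obtain \<eta> where \<eta>: "\<eta> \<in> characters" "\<And>h t. (h, t) \<in> C \<Longrightarrow> \<eta> h = \<theta> t"
    using character_factor_through_closed_subgroup[OF assms(1,2) compact_UNIV assms(3) \<theta>(1)] by blast
  show ?thesis
  proof (rule that)
    show "\<xi> \<in> dual_lattice D" using dual by (simp add: dual_lattice_def inner_commute)
    show "\<eta> h = cis (2 * pi * (\<xi> \<bullet> y))" if "(h, \<psi> y) \<in> C" for h y
      using \<eta>(2)[OF that] \<theta>(2) by simp
  qed (fact \<xi>(1) \<eta>(1))+
qed

lemma dense_extended_lattice:
  fixes L :: "((real^'n) \<times> 'h::{ab_group_add, topological_space}) set"
  assumes cps: "cut_and_project L" and D2: "dual_lattice D \<inter> fst ` annihilator L = {0}"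
  shows "closure (snd ` extended_lattice L \<psi>) = UNIV"
proof (rule ccontr)
  define C where "C = closure (snd ` extended_lattice L \<psi>)"
  assume "closure (snd ` extended_lattice L \<psi>) \<noteq> UNIV"
  then have "C \<noteq> UNIV" by (simp add: C_def)
  have lca_H: "lca_group TYPE('h)" and "add_subgroup L" and dense: "closure (snd ` L) = UNIV"
    using cps unfolding cut_and_project_def by blast+
  have "add_subgroup (snd ` extended_lattice L \<psi>)"
    using add_subgroup_extended_lattice[OF \<open>add_subgroup L\<close> hom_add]
    by (rule add_subgroup_image) simp
  then have "add_subgroup C"
    using lca_group_prod[OF lca_H lca_group] unfolding C_def lca_group_def
    by (intro add_subgroup_closure) blast+
  have in_C: "(h, \<psi> x) \<in> C" if "(x, h) \<in> L" for x h
    using that closure_subset unfolding C_def extended_lattice_def by force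
  have "fst ` C = UNIV"
  proof -
    have "snd ` L \<subseteq> fst ` C" using in_C by force
    moreover have "closed (fst ` C)" unfolding C_def by (intro closed_image_fst compact_UNIV) simp
    ultimately have "closure (snd ` L) \<subseteq> fst ` C" by (rule closure_minimal)
    then show ?thesis using dense by blast
  qed
  then obtain \<xi> \<eta> where \<xi>: "\<xi> \<noteq> 0" "\<xi> \<in> dual_lattice D" and "\<eta> \<in> characters"
    and \<eta>: "\<And>h y. (h, \<psi> y) \<in> C \<Longrightarrow> \<eta> h = cis (2 * pi * (\<xi> \<bullet> y))"
    using proper_closed_subgroup_character[of C] \<open>add_subgroup C\<close> \<open>C \<noteq> UNIV\<close> C_def by blast
  have "(\<xi>, \<lambda>h. cnj (\<eta> h)) \<in> annihilator L"
    unfolding annihilator_def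
    using characters_cnj[OF \<open>\<eta> \<in> characters\<close>] \<eta>[OF in_C] by (auto simp: cis_cnj cis_mult)
  then have "\<xi> \<in> dual_lattice D \<inter> fst ` annihilator L" using \<xi>(2) by force
  then show False using D2 \<xi>(1) by blast
qed

lemma cut_and_project_extended_lattice:
  fixes L :: "((real^'n) \<times> 'h::{ab_group_add, topological_space}) set"
  assumes "cut_and_project L" "dual_lattice D \<inter> fst ` annihilator L = {0}"
  shows "cut_and_project (extended_lattice L \<psi>)"
  using assms(1) dense_extended_lattice[OF assms] lca_group_prod[OF _ lca_group]
    add_subgroup_extended_lattice[OF _ hom_add] discrete_set_extended_lattice
    cocompact_extended_lattice[OF _ compact_UNIV] inj_on_fst_extended_lattice
  unfolding cut_and_project_def by blast

end

theorem theorem6p5: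
  fixes L :: "((real^'n) \<times> 'h::{ab_group_add, topological_space}) set"
    and D :: "(real^'n) set"
    and \<psi> :: "real^'n \<Rightarrow> 'k::{ab_group_add, topological_space}"
  assumes cps: "cut_and_project L"
    and cL: "countable L"
    and cLo: "countable (annihilator L)"
    and latD: "lattice D"
    and D1: "D \<inter> fst ` L = {0}"
    and D2: "dual_lattice D \<inter> fst ` annihilator L = {0}"
    and psi: "quotient_map_by D \<psi>"
  defines "\<phi> \<equiv> (\<lambda>x. (star_map L x, \<psi> x))"
    and "L' \<equiv> {(x, (star_map L x, \<psi> x)) | x. x \<in> fst ` L}"
  shows "(cut_and_project L' \<and> (\<forall>x \<in> fst ` L'. star_map L' x = \<phi> x) \<and> inj_on \<phi> (fst ` L))
       \<and> (\<forall>W. model_set L W = model_set L' (W \<times> UNIV))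
       \<and> (sigma_compact_type TYPE('h) \<longrightarrow> sigma_compact_type TYPE('h \<times> 'k))
       \<and> (metrisable_type TYPE('h) \<longrightarrow> metrisable_type TYPE('h \<times> 'k))"
proof -
  interpret torus_quotient D \<psi>
    by (intro torus_quotient.intro vector_quotient.intro torus_quotient_axioms.intro psi latD)
  have inj: "inj_on fst L" and "add_subgroup L"
    using cps unfolding cut_and_project_def by blast+
  have L': "L' = extended_lattice L \<psi>"
    unfolding L'_def extended_lattice_def using star_map_eq[OF inj] by force
  have "cut_and_project L'"
    unfolding L' by (rule cut_and_project_extended_lattice[OF cps D2])
  moreover have "\<forall>x \<in> fst ` L'. star_map L' x = \<phi> x"
    unfolding L' fst_extended_lattice \<phi>_def
    using star_map_eq[OF inj] star_map_extended_lattice[OF inj] by force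
  moreover have "inj_on \<phi> (fst ` L)"
    unfolding \<phi>_def using \<open>add_subgroup L\<close> D1
    by (intro inj_on_pair_with_quotient add_subgroup_image) auto
  moreover have "model_set L W = model_set L' (W \<times> UNIV)" for W
    unfolding L' model_set_extended_lattice ..
  ultimately show ?thesis
    using sigma_compact_type_prod[OF _ compact_UNIV] metrisable_type_prod[OF _ metrizable] by blast
qed

end
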